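(* Let $k,r,\delta$ be positive integers, let $n=\lceil k/r\rceil(r+\delta-1)$ and $d = n-k+1-\left(\lceil k/r\rceil-1\right)(\delta-1)$, and assume $\delta\le d$. Then for every prime power $q>n$ there exists an explicit $[n,k,d]$ linear code over $\mathbb{F}_q$ with all-symbol locality $(r,\delta)$; in particular its minimum distance attains $d = n-k+1-\left(\lceil k/r\rceil-1\right)(\delta-1)$.
   Context: Coordinate $i$ of a linear code $\mathcal{C}$ of length $n$ has locality $(r,\delta)$ if there is $S_i\subseteq[n]$ with $i\in S_i$, $|S_i|\le r+\delta-1$, such that the punctured code $\mathcal{C}|_{S_i}$ (delete coordinates outside $S_i$) has minimum distance at least $\delta$. A code has all-symbol locality $(r,\delta)$ (is an $(r,\delta)_a$ code) if every one of its $n$ coordinates has locality $(r,\delta)$. For such codes the minimum distance is at most $n-k+1-(\lceil k/r\rceil-1)(\delta-1)$; a code attaining this is called optimal. *)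

theory Defs
  imports Complex_Main "HOL-Library.Function_Algebras"
begin

text \<open>Words of length n over a field 'a are modelled as functions nat \<Rightarrow> 'a that vanish
  outside the index set {0..<n}.  Scalar multiplication is pointwise.\<close>

definition vscale :: "'a::field \<Rightarrow> (nat \<Rightarrow> 'a) \<Rightarrow> (nat \<Rightarrow> 'a)" where
  "vscale c x = (\<lambda>i. c * x i)"

definition words :: "nat \<Rightarrow> (nat \<Rightarrow> 'a::zero) set" where
  "words n = {x. \<forall>i\<ge>n. x i = 0}"

definition linear_code :: "nat \<Rightarrow> (nat \<Rightarrow> 'a::field) set \<Rightarrow> bool" where
  "linear_code n C \<longleftrightarrow> C \<subseteq> words n \<and> module.subspace vscale C"

definition code_dim :: "(nat \<Rightarrow> 'a::field) set \<Rightarrow> nat" where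
  "code_dim C = vector_space.dim vscale C"

text \<open>Hamming weight (words have finite support in our setting).\<close>
definition wt :: "(nat \<Rightarrow> 'a::zero) \<Rightarrow> nat" where
  "wt x = card {i. x i \<noteq> 0}"

definition min_dist :: "(nat \<Rightarrow> 'a::zero) set \<Rightarrow> nat" where
  "min_dist C = Min {wt x | x. x \<in> C \<and> x \<noteq> 0}"

text \<open>Puncturing: keep coordinates in S, delete (zero out) the others.\<close>
definition puncture :: "(nat \<Rightarrow> 'a::zero) set \<Rightarrow> nat set \<Rightarrow> (nat \<Rightarrow> 'a) set" where
  "puncture C S = (\<lambda>x. (\<lambda>i. if i \<in> S then x i else 0)) ` C"

text \<open>"Minimum distance at least delta"; a zero code has minimum distance infinity.\<close>
definition min_dist_ge :: "(nat \<Rightarrow> 'a::zero) set \<Rightarrow> nat \<Rightarrow> bool" where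
  "min_dist_ge C \<delta> \<longleftrightarrow> (\<forall>x\<in>C. x \<noteq> 0 \<longrightarrow> \<delta> \<le> wt x)"

definition has_locality :: "nat \<Rightarrow> (nat \<Rightarrow> 'a::zero) set \<Rightarrow> nat \<Rightarrow> nat \<Rightarrow> nat \<Rightarrow> bool" where
  "has_locality n C r \<delta> i \<longleftrightarrow>
     (\<exists>S. S \<subseteq> {0..<n} \<and> i \<in> S \<and> card S \<le> r + \<delta> - 1 \<and> min_dist_ge (puncture C S) \<delta>)"

definition all_symbol_locality :: "nat \<Rightarrow> (nat \<Rightarrow> 'a::zero) set \<Rightarrow> nat \<Rightarrow> nat \<Rightarrow> bool" where
  "all_symbol_locality n C r \<delta> \<longleftrightarrow> (\<forall>i<n. has_locality n C r \<delta> i)"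

end

theory Submission imports Defs "HOL-Computational_Algebra.Polynomial" begin

text \<open>Pick distinct evaluation points \<open>\<alpha>\<^sub>0, \<dots>, \<alpha>\<^sub>n\<^sub>-\<^sub>1\<close> (possible since \<open>q > n\<close>) and split the
  \<open>n = m(r + \<delta> - 1)\<close> coordinates into \<open>m = \<lceil>k/r\<rceil>\<close> consecutive blocks of length \<open>g = r + \<delta> - 1\<close>.
  The code is cut out by the local checks \<open>\<Sum>\<^sub>i\<^sub>\<in>\<^sub>B c\<^sub>i \<alpha>\<^sub>i\<^sup>t = 0\<close> (\<open>t < \<delta> - 1\<close>) on every block \<open>B\<close>
  and the global checks \<open>\<Sum>\<^sub>i c\<^sub>i \<alpha>\<^sub>i\<^sup>t = 0\<close> (\<open>t < d - 1\<close>).  Since the power sums below \<open>\<delta> - 1\<close> of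
  the whole word are sums of local ones, a nonzero codeword satisfies \<open>d - 1\<close> Vandermonde checks and
  therefore has weight at least \<open>d\<close>; its restriction to a block satisfies \<open>\<delta> - 1\<close> of them, which
  gives locality \<open>(r, \<delta>)\<close>.  Only \<open>m(\<delta> - 1) + (d - \<delta>)\<close> of the checks are new, and they are
  independent, so the dimension is \<open>n - m(\<delta> - 1) - (mr - k) = k\<close>.\<close>

lemma vandermonde_vanishing_coeff:
  fixes \<alpha> :: "nat \<Rightarrow> 'a::field" and c :: "nat \<Rightarrow> 'a"
  assumes fin: "finite T" and inj: "inj_on \<alpha> T"
    and eq: "\<And>t. t < card T \<Longrightarrow> (\<Sum>i\<in>T. c i * \<alpha> i ^ t) = 0"
    and b: "b \<in> T"
  shows "c b = 0"
proof -
  define h where "h = (\<Prod>a\<in>T-{b}. [:- \<alpha> a, 1:])"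
  have ph: "poly h x = (\<Prod>a\<in>T-{b}. x - \<alpha> a)" for x
    unfolding h_def by (simp add: poly_prod)
  have "degree h \<le> (\<Sum>a\<in>T-{b}. degree [:- \<alpha> a, 1:])"
    unfolding h_def using degree_prod_sum_le[of "T-{b}" "\<lambda>a. [:- \<alpha> a, 1:]"] fin by (simp add: o_def)
  also have "\<dots> = card (T - {b})" by simp
  finally have dh: "degree h < card T"
    using fin b by (metis card_Diff1_less le_less_trans)
  have "(\<Sum>i\<in>T. c i * poly h (\<alpha> i)) = (\<Sum>t\<le>degree h. coeff h t * (\<Sum>i\<in>T. c i * \<alpha> i ^ t))"
    by (simp add: poly_altdef sum_distrib_left sum_distrib_right mult_ac sum.swap[of _ T])
  also have "\<dots> = 0" using dh by (intro sum.neutral) (auto simp: eq)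
  finally have s0: "(\<Sum>i\<in>T. c i * poly h (\<alpha> i)) = 0" .
  have z: "poly h (\<alpha> i) = 0" if "i \<in> T" "i \<noteq> b" for i
    unfolding ph using fin that by (intro prod_zero) auto
  have nz: "poly h (\<alpha> b) \<noteq> 0"
    unfolding ph using fin inj b by (auto simp: inj_on_def)
  have "(\<Sum>i\<in>T. c i * poly h (\<alpha> i)) = c b * poly h (\<alpha> b)"
    using fin b z by (subst sum.remove[of _ b]) (auto intro!: sum.neutral)
  with s0 nz show ?thesis by simp
qed

lemma homogeneous_system_nontrivial_solution:
  fixes a :: "'e \<Rightarrow> nat \<Rightarrow> 'a::field"
  assumes "finite E" "finite U" "card E < card U"
  shows "\<exists>x. (\<forall>i. i \<notin> U \<longrightarrow> x i = 0) \<and> (\<exists>i\<in>U. x i \<noteq> 0) \<and> (\<forall>e\<in>E. (\<Sum>i\<in>U. a e i * x i) = 0)"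
  using assms
proof (induction E arbitrary: U a rule: finite_induct)
  case empty
  then obtain u where "u \<in> U" by (metis card.empty card_gt_0_iff ex_in_conv)
  then show ?case by (intro exI[of _ "\<lambda>i. if i = u then 1 else 0"]) auto
next
  case (insert e0 E U a)
  show ?case
  proof (cases "\<forall>i\<in>U. a e0 i = 0")
    case True
    from insert.IH[of U a] insert.prems insert.hyps obtain x where
      "\<forall>i. i \<notin> U \<longrightarrow> x i = 0" "\<exists>i\<in>U. x i \<noteq> 0" "\<forall>e\<in>E. (\<Sum>i\<in>U. a e i * x i) = 0"
      by auto
    with True show ?thesis by (intro exI[of _ x]) auto
  next
    case False
    then obtain v where v: "v \<in> U" "a e0 v \<noteq> 0" by auto
    \<comment> \<open>Gaussian elimination: clear the unknown \<open>v\<close> from the other equations.\<close>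
    define a' where "a' e i = a e i - a e v / a e0 v * a e0 i" for e i
    have "card E < card (U - {v})" using insert.prems insert.hyps v by simp
    with insert.IH[of "U - {v}" a'] insert.prems obtain x' where
      x': "\<forall>i. i \<notin> U - {v} \<longrightarrow> x' i = 0" "\<exists>i\<in>U-{v}. x' i \<noteq> 0"
          "\<forall>e\<in>E. (\<Sum>i\<in>U-{v}. a' e i * x' i) = 0"
      by auto
    define S0 where "S0 = (\<Sum>i\<in>U-{v}. a e0 i * x' i)"
    define x where "x = x'(v := - S0 / a e0 v)"
    have sU: "(\<Sum>i\<in>U. a e i * x i) = a e v * x v + (\<Sum>i\<in>U-{v}. a e i * x' i)" for e
      using insert.prems v by (subst sum.remove[of _ v]) (auto simp: x_def intro!: sum.cong)
    have "x i = 0" if "i \<notin> U" for i using x' that v by (auto simp: x_def)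
    moreover have "\<exists>i\<in>U. x i \<noteq> 0" using x' by (auto simp: x_def)
    moreover have "(\<Sum>i\<in>U. a e0 i * x i) = 0"
      using v by (subst sU) (simp add: S0_def[symmetric] x_def)
    moreover have "(\<Sum>i\<in>U. a e i * x i) = 0" if e: "e \<in> E" for e
    proof -
      have "(\<Sum>i\<in>U-{v}. a e i * x' i) = (\<Sum>i\<in>U-{v}. a' e i * x' i + a e v / a e0 v * (a e0 i * x' i))"
        by (intro sum.cong) (auto simp: a'_def algebra_simps)
      also have "\<dots> = a e v / a e0 v * S0"
        using x'(3) e by (simp add: sum.distrib sum_distrib_left S0_def)
      finally show ?thesis using v by (subst sU) (simp add: x_def field_simps)
    qed
    ultimately show ?thesis by (intro exI[of _ x]) auto
  qed
qed

lemma sum_atLeastLessThan_blocks: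
  fixes f :: "nat \<Rightarrow> 'a::comm_monoid_add"
  shows "(\<Sum>i\<in>{0..<m*g}. f i) = (\<Sum>j<m. \<Sum>i\<in>{j*g..<j*g+g}. f i)"
proof (induction m)
  case (Suc m)
  have "(\<Sum>i\<in>{0..<m*g+g}. f i) = (\<Sum>i\<in>{0..<m*g}. f i) + (\<Sum>i\<in>{m*g..<m*g+g}. f i)"
    by (rule sum.atLeastLessThan_concat[symmetric]) simp_all
  with Suc show ?case by (simp add: add.commute)
qed simp

lemma div_eq_iff_in_block: "0 < g \<Longrightarrow> i div g = j \<longleftrightarrow> j*g \<le> i \<and> i < j*g+g" for i j g :: nat
  by (auto simp: div_nat_eqI mult.commute) (metis add.commute dividend_less_div_times mult.commute)

lemma block_subset_atLeastLessThan: "j < m \<Longrightarrow> {j*g..<j*g+g} \<subseteq> {0..<m*g}" for j m g :: nat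
  using mult_le_mono1[of "Suc j" m g] by auto

lemma ceiling_divide_bounds:
  fixes k r :: nat
  assumes "0 < k" "0 < r"
  defines "m \<equiv> nat \<lceil>real k / real r\<rceil>"
  shows "0 < m" "k \<le> m * r" "m * r < k + r"
proof -
  have pos: "0 < real k / real r" using assms by simp
  then have "\<lceil>real k / real r\<rceil> = int m" by (simp add: m_def)
  then have bounds: "real m - 1 < real k / real r" "real k / real r \<le> real m"
    using ceiling_correct[of "real k / real r"] by simp_all
  from pos show "0 < m" by (simp add: m_def)
  from bounds(2) have "real k \<le> real m * real r" using assms(2) by (simp add: divide_le_eq)
  then show "k \<le> m * r" by (metis of_nat_le_iff of_nat_mult)
  from bounds(1) have "real m * real r < real k + real r" using assms(2) by (simp add: field_simps)
  then show "m * r < k + r" by (metis of_nat_add of_nat_less_iff of_nat_mult)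
qed

lemma card_mod_less:
  fixes m g s :: nat
  assumes "s \<le> g"
  shows "card {q. q < m*g \<and> q mod g < s} = m * s"
proof -
  define f where "f = (\<lambda>(j, t). j*g + t)"
  have "inj_on f ({..<m} \<times> {..<s})"
  proof (rule inj_onI)
    fix p p' assume "p \<in> {..<m} \<times> {..<s}" "p' \<in> {..<m} \<times> {..<s}" "f p = f p'"
    moreover obtain j t j' t' where p: "p = (j, t)" "p' = (j', t')" by fastforce
    ultimately have "t < g" "t' < g" "j*g + t = j'*g + t'" using assms by (auto simp: f_def)
    moreover from \<open>t < g\<close> have "(j*g + t) div g = j" "(j*g + t) mod g = t" by simp_all
    moreover from \<open>t' < g\<close> have "(j'*g + t') div g = j'" "(j'*g + t') mod g = t'" by simp_all
    ultimately show "p = p'" using p by metis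
  qed
  moreover have "f ` ({..<m} \<times> {..<s}) = {q. q < m*g \<and> q mod g < s}"
  proof (intro equalityI subsetI)
    fix q assume "q \<in> f ` ({..<m} \<times> {..<s})"
    then obtain j t where "j < m" "t < s" "q = j*g + t" by (auto simp: f_def)
    with assms block_subset_atLeastLessThan[of j m g] show "q \<in> {q. q < m*g \<and> q mod g < s}" by auto
  next
    fix q assume q: "q \<in> {q. q < m*g \<and> q mod g < s}"
    then have "q = f (q div g, q mod g)" "q div g < m" by (auto simp: f_def less_mult_imp_div_less)
    with q show "q \<in> f ` ({..<m} \<times> {..<s})" by force
  qed
  ultimately show ?thesis by (metis card_image card_cartesian_product card_lessThan)
qed

interpretation vs: vector_space "vscale :: 'a::field \<Rightarrow> (nat \<Rightarrow> 'a) \<Rightarrow> _"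
  by unfold_locales (auto simp: vscale_def fun_eq_iff algebra_simps)

lemma vscale_apply [simp]: "vscale c x i = c * x i"
  by (simp add: vscale_def)

lemma sum_fun_apply: "(sum f A) x = (\<Sum>a\<in>A. f a x)" for f :: "'b \<Rightarrow> nat \<Rightarrow> 'a::comm_monoid_add"
  by (induction A rule: infinite_finite_induct) auto

lemma dim_eq_card_information_set:
  fixes C :: "(nat \<Rightarrow> 'a::field) set"
  assumes sub: "vs.subspace C" and fP: "finite P"
    and unit: "\<And>p. p \<in> P \<Longrightarrow> \<exists>y\<in>C. y p = 1 \<and> (\<forall>p'\<in>P - {p}. y p' = 0)"
    and determined: "\<And>c. c \<in> C \<Longrightarrow> \<forall>p\<in>P. c p = 0 \<Longrightarrow> c = 0"
  shows "vs.dim C = card P"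
proof -
  obtain u where u: "\<And>p. p \<in> P \<Longrightarrow> u p \<in> C \<and> u p p = 1 \<and> (\<forall>p'\<in>P - {p}. u p p' = 0)"
    using unit by metis
  have expand: "(\<Sum>p\<in>P. vscale (f p) (u p)) p' = f p'" if "p' \<in> P" for f p'
    using fP that u by (simp add: sum_fun_apply sum.remove[of P p'] sum.neutral)
  have inj: "inj_on u P"
    by (rule inj_onI) (metis u zero_neq_one Diff_iff singletonD)
  have ind: "vs.independent (u ` P)"
  proof (rule vs.independent_if_scalars_zero)
    fix f y assume s: "(\<Sum>x\<in>u ` P. vscale (f x) x) = 0" and "y \<in> u ` P"
    then obtain p where p: "p \<in> P" "y = u p" by auto
    have "0 = (\<Sum>p'\<in>P. vscale (f (u p')) (u p')) p"
      using s by (simp add: sum.reindex[OF inj])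
    with expand[OF p(1)] p show "f y = 0" by simp
  qed (use fP in simp)
  have span: "C \<subseteq> vs.span (u ` P)"
  proof
    fix c assume c: "c \<in> C"
    define s where "s = (\<Sum>p\<in>P. vscale (c p) (u p))"
    have "s \<in> C" unfolding s_def
      using u by (intro vs.subspace_sum[OF sub] vs.subspace_scale[OF sub]) auto
    then have "c - s = 0"
      using c expand by (intro determined vs.subspace_diff[OF sub]) (auto simp: s_def)
    moreover have "s \<in> vs.span (u ` P)" unfolding s_def
      by (intro vs.span_sum vs.span_scale vs.span_base) auto
    ultimately show "c \<in> vs.span (u ` P)" by simp
  qed
  have "u ` P \<subseteq> C" using u by auto
  then have "vs.dim C = card (u ` P)"
    using vs.basis_card_eq_dim[OF _ span ind] by simp
  with card_image[OF inj] show ?thesis by simp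
qed

locale vandermonde_lrc =
  fixes \<alpha> :: "nat \<Rightarrow> 'a::field" and m g \<delta> e :: nat
  assumes inj: "inj_on \<alpha> {0..<m*g}" and dpos: "0 < \<delta>" and dle: "\<delta> + e \<le> g" and mpos: "0 < m"
begin

definition "n = m * g"
definition "d = \<delta> + e"

text \<open>Parity checks are indexed by positions \<open>q < n\<close>: \<open>q = jg + t\<close> with \<open>t < \<delta> - 1\<close> is the \<open>t\<close>-th
  local check of block \<open>j\<close>, and \<open>q < d - 1\<close> (otherwise) is the global check with exponent \<open>q\<close>.
  Hence \<open>{0..<n} - Q\<close> will be an information set.\<close>

definition "Q = {q. q < n \<and> (q mod g < \<delta> - 1 \<or> q < d - 1)}"
definition "coef q i = (if q mod g < \<delta> - 1 then (if q div g = i div g then \<alpha> i ^ (q mod g) else 0) else \<alpha> i ^ q)"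
definition "C = {c \<in> words n. \<forall>q\<in>Q. (\<Sum>i\<in>{0..<n}. coef q i * c i) = 0}"

lemma gpos: "0 < g"
  using dpos dle by simp

lemma g_le_n: "g \<le> n"
  using mpos by (simp add: n_def)

lemma Q_subset: "Q \<subseteq> {0..<n}"
  by (auto simp: Q_def)

lemma codeword_vanishes_beyond_n: "c \<in> C \<Longrightarrow> n \<le> i \<Longrightarrow> c i = 0"
  by (auto simp: C_def words_def)

lemma support_subset: "c \<in> C \<Longrightarrow> {i. c i \<noteq> 0} \<subseteq> {0..<n}"
  using codeword_vanishes_beyond_n by (auto simp: not_le[symmetric])

lemma subspace_C: "vs.subspace C"
proof (rule vs.subspaceI)
  fix a x assume "x \<in> C"
  moreover have "(\<Sum>i\<in>{0..<n}. coef q i * (a * x i)) = a * (\<Sum>i\<in>{0..<n}. coef q i * x i)" for q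
    by (simp add: sum_distrib_left mult_ac)
  ultimately show "vscale a x \<in> C" by (auto simp: C_def words_def)
qed (auto simp: C_def words_def distrib_left sum.distrib)

lemma local_check:
  assumes c: "c \<in> C" and j: "j < m" and t: "t < \<delta> - 1"
  shows "(\<Sum>i\<in>{j*g..<j*g+g}. c i * \<alpha> i ^ t) = 0"
proof -
  define q where "q = j*g + t"
  have "t < g" using t dle by simp
  then have qm: "q mod g = t" "q div g = j" by (auto simp: q_def)
  have blk: "{j*g..<j*g+g} \<subseteq> {0..<n}"
    using block_subset_atLeastLessThan[OF j] by (simp add: n_def)
  with \<open>t < g\<close> have "q \<in> Q" using qm t by (auto simp: Q_def q_def)
  then have "0 = (\<Sum>i\<in>{0..<n}. coef q i * c i)" using c by (simp add: C_def)
  also have "\<dots> = (\<Sum>i\<in>{0..<n}. if i \<in> {j*g..<j*g+g} then c i * \<alpha> i ^ t else 0)"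
  proof (intro sum.cong refl)
    fix i
    have "q div g = i div g \<longleftrightarrow> i \<in> {j*g..<j*g+g}"
      using div_eq_iff_in_block[OF gpos, of i j] qm by auto
    then show "coef q i * c i = (if i \<in> {j*g..<j*g+g} then c i * \<alpha> i ^ t else 0)"
      using qm t by (simp add: coef_def mult.commute)
  qed
  also have "\<dots> = (\<Sum>i\<in>{0..<n} \<inter> {j*g..<j*g+g}. c i * \<alpha> i ^ t)"
    by (rule sum.inter_restrict[symmetric]) simp
  also have "{0..<n} \<inter> {j*g..<j*g+g} = {j*g..<j*g+g}" using blk by blast
  finally show ?thesis by simp
qed

lemma global_check:
  assumes c: "c \<in> C" and t: "t < d - 1"
  shows "(\<Sum>i\<in>{0..<n}. c i * \<alpha> i ^ t) = 0"
proof (cases "t < \<delta> - 1")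
  case True
  then show ?thesis
    using local_check[OF c] by (simp add: n_def sum_atLeastLessThan_blocks)
next
  case False
  have "t < g" using t dle by (simp add: d_def)
  then have "t \<in> Q" using t g_le_n by (simp add: Q_def)
  then have "(\<Sum>i\<in>{0..<n}. coef t i * c i) = 0" using c by (simp add: C_def)
  moreover have "coef t i = \<alpha> i ^ t" for i using False \<open>t < g\<close> by (simp add: coef_def)
  ultimately show ?thesis by (simp add: mult.commute)
qed

lemma vanishes_by_vandermonde:
  assumes T: "T \<subseteq> {0..<n}" and checks: "\<And>t. t < card T \<Longrightarrow> (\<Sum>i\<in>T. c i * \<alpha> i ^ t) = 0"
  shows "\<forall>i\<in>T. c i = 0"
proof -
  have "finite T" using T finite_subset by blast
  moreover have "inj_on \<alpha> T" using inj_on_subset[OF inj] T by (simp add: n_def)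
  ultimately show ?thesis using vandermonde_vanishing_coeff[OF _ _ checks] by blast
qed

lemma weight_lt_d_imp_zero:
  assumes c: "c \<in> C" and w: "wt c < d"
  shows "c = 0"
proof -
  have "\<forall>i\<in>{i. c i \<noteq> 0}. c i = 0"
  proof (rule vanishes_by_vandermonde[OF support_subset[OF c]])
    fix t assume "t < card {i. c i \<noteq> 0}"
    then have "t < d - 1" using w by (simp add: wt_def)
    have "(\<Sum>i\<in>{i. c i \<noteq> 0}. c i * \<alpha> i ^ t) = (\<Sum>i\<in>{0..<n}. c i * \<alpha> i ^ t)"
      using support_subset[OF c] by (intro sum.mono_neutral_left) auto
    with global_check[OF c \<open>t < d - 1\<close>] show "(\<Sum>i\<in>{i. c i \<noteq> 0}. c i * \<alpha> i ^ t) = 0" by simp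
  qed
  then show ?thesis by (auto simp: fun_eq_iff)
qed

lemma block_weight_lt_delta_imp_zero:
  assumes c: "c \<in> C" and j: "j < m" and w: "card ({i. c i \<noteq> 0} \<inter> {j*g..<j*g+g}) < \<delta>"
  shows "\<forall>i\<in>{j*g..<j*g+g}. c i = 0"
proof -
  define T where "T = {i. c i \<noteq> 0} \<inter> {j*g..<j*g+g}"
  have "\<forall>i\<in>T. c i = 0"
  proof (rule vanishes_by_vandermonde)
    show "T \<subseteq> {0..<n}" using support_subset[OF c] by (auto simp: T_def)
    fix t assume "t < card T"
    then have "t < \<delta> - 1" using w by (simp add: T_def)
    have "(\<Sum>i\<in>T. c i * \<alpha> i ^ t) = (\<Sum>i\<in>{j*g..<j*g+g}. c i * \<alpha> i ^ t)"
      by (intro sum.mono_neutral_left) (auto simp: T_def)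
    with local_check[OF c j \<open>t < \<delta> - 1\<close>] show "(\<Sum>i\<in>T. c i * \<alpha> i ^ t) = 0" by simp
  qed
  then show ?thesis by (auto simp: T_def)
qed

text \<open>Outside block 0 the positions in \<open>Q\<close> are the \<open>\<delta> - 1\<close> local ones of each block, so those blocks
  vanish by locality; the rest lies in the first \<open>d - 1\<close> positions and has weight below \<open>d\<close>.\<close>

lemma zero_outside_Q_imp_zero:
  assumes c: "c \<in> C" and z: "\<And>i. i \<notin> Q \<Longrightarrow> c i = 0"
  shows "c = 0"
proof -
  have blk: "\<forall>i\<in>{j*g..<j*g+g}. c i = 0" if j: "1 \<le> j" "j < m" for j
  proof (rule block_weight_lt_delta_imp_zero[OF c \<open>j < m\<close>])
    have "{i. c i \<noteq> 0} \<inter> {j*g..<j*g+g} \<subseteq> {j*g..<j*g+(\<delta>-1)}"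
    proof
      fix i assume i: "i \<in> {i. c i \<noteq> 0} \<inter> {j*g..<j*g+g}"
      then have "i \<in> Q" using z by auto
      have "g \<le> i" using i j by (auto intro: le_trans[of g "j*g"])
      then have "i mod g < \<delta> - 1" using \<open>i \<in> Q\<close> dle by (auto simp: Q_def d_def)
      moreover have "i div g = j" using i div_eq_iff_in_block[OF gpos] by auto
      then have "i = j*g + i mod g" using div_mult_mod_eq[of i g] by simp
      ultimately have "j*g \<le> i \<and> i < j*g + (\<delta>-1)" by linarith
      then show "i \<in> {j*g..<j*g+(\<delta>-1)}" by simp
    qed
    then have "card ({i. c i \<noteq> 0} \<inter> {j*g..<j*g+g}) \<le> \<delta> - 1"
      by (metis card_atLeastLessThan card_mono finite_atLeastLessThan add_diff_cancel_left')
    then show "card ({i. c i \<noteq> 0} \<inter> {j*g..<j*g+g}) < \<delta>" using dpos by simp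
  qed
  have "{i. c i \<noteq> 0} \<subseteq> {0..<d-1}"
  proof
    fix i assume i: "i \<in> {i. c i \<noteq> 0}"
    then have "i < n" using support_subset[OF c] by auto
    then have "i div g < m" by (simp add: n_def less_mult_imp_div_less)
    moreover have "i div g * g \<le> i \<and> i < i div g * g + g" using div_eq_iff_in_block[OF gpos] by auto
    ultimately have "i < g" using blk[of "i div g"] i by (cases "i div g = 0") auto
    moreover have "i \<in> Q" using z i by auto
    ultimately show "i \<in> {0..<d-1}" using dle by (auto simp: Q_def d_def)
  qed
  then have "wt c \<le> d - 1" unfolding wt_def
    by (metis card_atLeastLessThan card_mono finite_atLeastLessThan minus_nat.diff_0)
  then show ?thesis using weight_lt_d_imp_zero[OF c] dpos by (simp add: d_def)
qed

lemma card_Q: "card Q = m * (\<delta> - 1) + e"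
proof -
  define Q1 where "Q1 = {q. q < n \<and> q mod g < \<delta> - 1}"
  have "Q = Q1 \<union> {\<delta>-1..<d-1}"
  proof -
    have "q mod g = q" if "q < d - 1" for q using that dle by (simp add: d_def)
    moreover have "d - 1 < n" using g_le_n dle dpos by (simp add: d_def)
    ultimately show ?thesis by (auto simp: Q_def Q1_def)
  qed
  moreover have "Q1 \<inter> {\<delta>-1..<d-1} = {}" using dle by (auto simp: Q1_def d_def)
  moreover have "card Q1 = m * (\<delta> - 1)" using card_mod_less dle by (simp add: Q1_def n_def)
  ultimately show ?thesis using dpos by (simp add: card_Un_disjoint Q1_def d_def)
qed

lemma exists_weight_d: "\<exists>x\<in>C. x \<noteq> 0 \<and> wt x = d"
proof -
  have "card {0..<d-1} < card {0..<d}" using dpos by (simp add: d_def)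
  from homogeneous_system_nontrivial_solution[OF _ _ this, of coef] obtain x where
    x: "\<forall>i. i \<notin> {0..<d} \<longrightarrow> x i = 0" "\<exists>i\<in>{0..<d}. x i \<noteq> 0"
       "\<forall>q\<in>{0..<d-1}. (\<Sum>i\<in>{0..<d}. coef q i * x i) = 0"
    by auto
  have dn: "d \<le> n" using dle g_le_n by (simp add: d_def)
  have sx: "(\<Sum>i\<in>{0..<n}. coef q i * x i) = (\<Sum>i\<in>{0..<d}. coef q i * x i)" for q
    using dn x(1) by (intro sum.mono_neutral_right) auto
  have "(\<Sum>i\<in>{0..<n}. coef q i * x i) = 0" if q: "q \<in> Q" for q
  proof (cases "q < d - 1")
    case True
    with x(3) sx show ?thesis by simp
  next
    \<comment> \<open>The local checks of later blocks do not see the first \<open>d \<le> g\<close> coordinates.\<close>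
    case False
    have qm: "q mod g < \<delta> - 1" using q False by (simp add: Q_def)
    have "g \<le> q"
    proof (rule ccontr)
      assume "\<not> g \<le> q"
      then have "q mod g = q" by simp
      with qm False show False by (simp add: d_def)
    qed
    then have "q div g \<noteq> 0" using gpos by (simp add: div_eq_0_iff)
    moreover have "i div g = 0" if "i < d" for i using that dle by (simp add: d_def)
    ultimately have "(\<Sum>i\<in>{0..<d}. coef q i * x i) = 0"
      using qm by (intro sum.neutral) (auto simp: coef_def)
    with sx show ?thesis by simp
  qed
  moreover have "x \<in> words n" using x(1) dn by (simp add: words_def)
  ultimately have "x \<in> C" by (simp add: C_def)
  moreover have "x \<noteq> 0" using x(2) by auto
  moreover have "wt x \<le> d"
  proof -
    have "{i. x i \<noteq> 0} \<subseteq> {0..<d}" using x(1) by auto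
    from card_mono[OF finite_atLeastLessThan this] show ?thesis by (simp add: wt_def)
  qed
  moreover have "\<not> wt x < d" using weight_lt_d_imp_zero \<open>x \<in> C\<close> \<open>x \<noteq> 0\<close> by blast
  ultimately show ?thesis by (intro bexI[of _ x]) auto
qed

lemma unit_codeword:
  assumes p: "p \<in> {0..<n} - Q"
  shows "\<exists>y\<in>C. y p = 1 \<and> (\<forall>i. i \<notin> insert p Q \<longrightarrow> y i = 0)"
proof -
  have fQ: "finite Q" using Q_subset finite_subset by blast
  have "card Q < card (insert p Q)" using p fQ by simp
  from homogeneous_system_nontrivial_solution[OF fQ _ this, of coef] fQ obtain x where
    x: "\<forall>i. i \<notin> insert p Q \<longrightarrow> x i = 0" "\<exists>i\<in>insert p Q. x i \<noteq> 0"
       "\<forall>q\<in>Q. (\<Sum>i\<in>insert p Q. coef q i * x i) = 0" by auto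
  have U: "insert p Q \<subseteq> {0..<n}" using p Q_subset by auto
  have "(\<Sum>i\<in>{0..<n}. coef q i * x i) = (\<Sum>i\<in>insert p Q. coef q i * x i)" for q
    using U x(1) by (intro sum.mono_neutral_right) auto
  moreover have "i \<notin> insert p Q" if "n \<le> i" for i using U that by auto
  then have "x \<in> words n" using x(1) by (auto simp: words_def)
  ultimately have "x \<in> C" using x(3) by (simp add: C_def)
  have "x p \<noteq> 0"
  proof
    assume "x p = 0"
    then have "x i = 0" if "i \<notin> Q" for i using x(1) that by (cases "i = p") auto
    then have "x = 0" using zero_outside_Q_imp_zero[OF \<open>x \<in> C\<close>] by blast
    then show False using x(2) by simp
  qed
  then show ?thesis
    using vs.subspace_scale[OF subspace_C \<open>x \<in> C\<close>, of "1 / x p"] x(1)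
    by (intro bexI[of _ "vscale (1 / x p) x"]) auto
qed

lemma dim_C: "vs.dim C = n - card Q"
proof -
  have "vs.dim C = card ({0..<n} - Q)"
  proof (rule dim_eq_card_information_set[OF subspace_C])
    fix p assume "p \<in> {0..<n} - Q"
    then show "\<exists>y\<in>C. y p = 1 \<and> (\<forall>p'\<in>{0..<n} - Q - {p}. y p' = 0)"
      using unit_codeword by fastforce
  next
    fix c assume c: "c \<in> C" and vanish: "\<forall>p\<in>{0..<n} - Q. c p = 0"
    show "c = 0"
    proof (rule zero_outside_Q_imp_zero[OF c])
      fix i assume "i \<notin> Q"
      with vanish codeword_vanishes_beyond_n[OF c] show "c i = 0" by (cases "i < n") auto
    qed
  qed simp
  then show ?thesis using Q_subset by (simp add: card_Diff_subset finite_subset)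
qed

lemma linear_code_C: "linear_code n C"
  using subspace_C by (auto simp: linear_code_def C_def)

lemma code_dim_C: "code_dim C = n - (m * (\<delta> - 1) + e)"
  using dim_C card_Q by (simp add: code_dim_def)

lemma min_dist_C: "min_dist C = d"
proof -
  have "{wt x |x. x \<in> C \<and> x \<noteq> 0} \<subseteq> {..n}"
    using support_subset by (auto simp: wt_def intro!: card_mono[of "{0..<n}", simplified])
  then have "finite {wt x |x. x \<in> C \<and> x \<noteq> 0}" by (rule finite_subset) simp
  moreover obtain x where "x \<in> C" "x \<noteq> 0" "wt x = d" using exists_weight_d by blast
  ultimately show ?thesis unfolding min_dist_def using weight_lt_d_imp_zero
    by (intro Min_eqI) (force simp: not_less[symmetric])+
qed

lemma all_symbol_locality_C: "all_symbol_locality n C (g + 1 - \<delta>) \<delta>"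
  unfolding all_symbol_locality_def has_locality_def
proof (intro allI impI)
  fix i assume "i < n"
  define j where "j = i div g"
  define S where "S = {j*g..<j*g+g}"
  have j: "j < m" using \<open>i < n\<close> by (simp add: j_def n_def less_mult_imp_div_less)
  have "min_dist_ge (puncture C S) \<delta>"
    unfolding min_dist_ge_def puncture_def
  proof clarify
    fix c assume c: "c \<in> C" and nz: "(\<lambda>i. if i \<in> S then c i else 0) \<noteq> 0"
    show "\<delta> \<le> wt (\<lambda>i. if i \<in> S then c i else 0)"
    proof (rule ccontr)
      have "{i'. (if i' \<in> S then c i' else 0) \<noteq> 0} = {i'. c i' \<noteq> 0} \<inter> S" by auto
      moreover assume "\<not> \<delta> \<le> wt (\<lambda>i. if i \<in> S then c i else 0)"
      ultimately have "card ({i'. c i' \<noteq> 0} \<inter> S) < \<delta>" by (simp add: wt_def)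
      then have "\<forall>i\<in>S. c i = 0" using block_weight_lt_delta_imp_zero[OF c j] unfolding S_def by blast
      with nz show False by auto
    qed
  qed
  moreover have "S \<subseteq> {0..<n}" using block_subset_atLeastLessThan[OF j] by (simp add: S_def n_def)
  moreover have "i \<in> S" using div_eq_iff_in_block[OF gpos, of i j] by (simp add: S_def j_def)
  ultimately show "\<exists>S\<subseteq>{0..<n}. i \<in> S \<and> card S \<le> g + 1 - \<delta> + \<delta> - 1 \<and> min_dist_ge (puncture C S) \<delta>"
    using dle by (intro exI[of _ S]) (auto simp: S_def)
qed

end

theorem theorem4:
  fixes k r \<delta> n d :: nat
  assumes "0 < k" "0 < r" "0 < \<delta>"
    and n_def: "n = nat \<lceil>real k / real r\<rceil> * (r + \<delta> - 1)"
    and d_def: "int d = int n - int k + 1 - (\<lceil>real k / real r\<rceil> - 1) * (int \<delta> - 1)"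
    and "\<delta> \<le> d"
    and "card (UNIV :: 'a set) > n"
  shows "\<exists>C :: (nat \<Rightarrow> 'a::{field,finite}) set. linear_code n C \<and> code_dim C = k \<and> min_dist C = d
           \<and> all_symbol_locality n C r \<delta>"
proof -
  define m where "m = nat \<lceil>real k / real r\<rceil>"
  define e where "e = m * r - k"
  have m: "0 < m" "k \<le> m * r" "m * r < k + r"
    using ceiling_divide_bounds[OF assms(1,2)] by (simp_all add: m_def)
  have "r + \<delta> - 1 = r + (\<delta> - 1)" using assms(3) by simp
  with n_def have n: "n = m * r + m * (\<delta> - 1)" by (simp add: m_def distrib_left)
  have "\<lceil>real k / real r\<rceil> = int m" using m(1) by (simp add: m_def)
  moreover have "int n = int m * int r + int m * (int \<delta> - 1)" using n assms(3) by (simp add: of_nat_diff)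
  ultimately have "int d = int \<delta> + (int m * int r - int k)" using d_def by (simp add: algebra_simps)
  then have d: "d = \<delta> + e" using m(2) unfolding e_def by (simp add: of_nat_diff flip: of_nat_mult)
  have "card {0..<n} \<le> card (UNIV :: 'a set)" using assms(7) by simp
  then obtain \<alpha> :: "nat \<Rightarrow> 'a" where "inj_on \<alpha> {0..<n}"
    using card_le_inj[OF finite_atLeastLessThan finite_UNIV] by blast
  then interpret L: vandermonde_lrc \<alpha> m "r + \<delta> - 1" \<delta> e
    using assms(2,3) m by unfold_locales (auto simp: n e_def algebra_simps)
  have "L.n = n" "L.d = d" unfolding L.n_def L.d_def using n_def d by (simp_all add: m_def)
  then show ?thesis
    using L.linear_code_C L.code_dim_C L.min_dist_C L.all_symbol_locality_C n m(2) assms(3)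
    by (intro exI[of _ L.C]) (simp add: e_def)
qed

end
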